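(* Let $E_1,E_2$ be vector spaces of the same finite dimension $n$ over a field $\mathbb{K}$, and let $\mathsf{P}(E_i)$ be the lattice of all subspaces of $E_i$. Then there is an injective map from the set $\mathbb{P}(E_1\otimes E_2)$ of one-dimensional subspaces of $E_1\otimes E_2$ to the set of atoms of $\mathsf{P}(E_1)\multimap\mathsf{P}(E_2):=(\mathsf{P}(E_1)\circledast\mathsf{P}(E_2)^{\mathrm{op}})^{\mathrm{op}}$.
   Context: Lattice notation: $\Sigma_i,\Sigma_i'$ atoms and coatoms; $\Sigma[a]$ atoms below $a$; $\mathsf{Cl}(\omega)=\{\Sigma[a];a\in\omega\}$; $\mathcal{L}^{\mathrm{op}}$ dual lattice. For complete atomistic coatomistic lattices $\mathcal{L}_1,\mathcal{L}_2$: $\Sigma'_\circledast$ is the set of $R\subsetneqq\Sigma_1\times\Sigma_2$ such that for all $(p_1,p_2)$, $\{q_1;(q_1,p_2)\in R\}\in\mathsf{Cl}(\Sigma_1'\cup\{1\})$ and $\{q_2;(p_1,q_2)\in R\}\in\mathsf{Cl}(\Sigma_2'\cup\{1\})$, and $\mathcal{L}_1\circledast\mathcal{L}_2:=\{\bigcap\omega;\omega\subseteq\Sigma'_\circledast\cup\{\Sigma_1\times\Sigma_2\}\}$ ordered by inclusion. *)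

theory Defs
  imports Complex_Main "HOL-Library.Function_Algebras"
begin

text \<open>A lattice is represented by a carrier set L and an order le on it.
  The dual lattice L^op is the same carrier with the reversed order.\<close>

definition lat_atoms :: "'x set \<Rightarrow> ('x \<Rightarrow> 'x \<Rightarrow> bool) \<Rightarrow> 'x set" where
  "lat_atoms L le = {a \<in> L. (\<exists>x\<in>L. le x a \<and> x \<noteq> a) \<and>
                          (\<forall>x\<in>L. le x a \<and> x \<noteq> a \<longrightarrow> (\<forall>y\<in>L. le x y))}"

definition dual_ord :: "('x \<Rightarrow> 'x \<Rightarrow> bool) \<Rightarrow> 'x \<Rightarrow> 'x \<Rightarrow> bool" where
  "dual_ord le = (\<lambda>x y. le y x)"

definition lat_coatoms :: "'x set \<Rightarrow> ('x \<Rightarrow> 'x \<Rightarrow> bool) \<Rightarrow> 'x set" where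
  "lat_coatoms L le = lat_atoms L (dual_ord le)"

definition lat_top :: "'x set \<Rightarrow> ('x \<Rightarrow> 'x \<Rightarrow> bool) \<Rightarrow> 'x" where
  "lat_top L le = (THE t. t \<in> L \<and> (\<forall>x\<in>L. le x t))"

definition atoms_below :: "'x set \<Rightarrow> ('x \<Rightarrow> 'x \<Rightarrow> bool) \<Rightarrow> 'x \<Rightarrow> 'x set" where
  "atoms_below L le a = {p \<in> lat_atoms L le. le p a}"

definition lat_Cl :: "'x set \<Rightarrow> ('x \<Rightarrow> 'x \<Rightarrow> bool) \<Rightarrow> 'x set \<Rightarrow> 'x set set" where
  "lat_Cl L le \<omega> = {atoms_below L le a | a. a \<in> \<omega>}"

definition sigma_coprod ::
  "'x set \<Rightarrow> ('x \<Rightarrow> 'x \<Rightarrow> bool) \<Rightarrow> 'y set \<Rightarrow> ('y \<Rightarrow> 'y \<Rightarrow> bool) \<Rightarrow> ('x \<times> 'y) set set" where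
  "sigma_coprod L1 le1 L2 le2 =
     {R. R \<subset> lat_atoms L1 le1 \<times> lat_atoms L2 le2 \<and>
         (\<forall>p1\<in>lat_atoms L1 le1. \<forall>p2\<in>lat_atoms L2 le2.
            {q1. (q1, p2) \<in> R} \<in> lat_Cl L1 le1 (lat_coatoms L1 le1 \<union> {lat_top L1 le1}) \<and>
            {q2. (p1, q2) \<in> R} \<in> lat_Cl L2 le2 (lat_coatoms L2 le2 \<union> {lat_top L2 le2}))}"

text \<open>\<open>L1 \<circledast> L2\<close>: all intersections of families from \<open>\<Sigma>'_\<circledast> \<union> {\<Sigma>1 \<times> \<Sigma>2}\<close>
  (the empty intersection being \<open>\<Sigma>1 \<times> \<Sigma>2\<close>), ordered by inclusion.\<close>
definition lat_coprod ::
  "'x set \<Rightarrow> ('x \<Rightarrow> 'x \<Rightarrow> bool) \<Rightarrow> 'y set \<Rightarrow> ('y \<Rightarrow> 'y \<Rightarrow> bool) \<Rightarrow> ('x \<times> 'y) set set" where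
  "lat_coprod L1 le1 L2 le2 =
     {(lat_atoms L1 le1 \<times> lat_atoms L2 le2) \<inter> \<Inter>\<omega> | \<omega>.
        \<omega> \<subseteq> sigma_coprod L1 le1 L2 le2 \<union> {lat_atoms L1 le1 \<times> lat_atoms L2 le2}}"

definition subspaces :: "('a::field \<Rightarrow> 'v::ab_group_add \<Rightarrow> 'v) \<Rightarrow> 'v set set" where
  "subspaces s = {S. module.subspace s S}"

definition bilinear_form :: "('a::field \<Rightarrow> 'v::ab_group_add \<Rightarrow> 'v) \<Rightarrow> ('a \<Rightarrow> 'w::ab_group_add \<Rightarrow> 'w) \<Rightarrow> ('v \<Rightarrow> 'w \<Rightarrow> 'a) \<Rightarrow> bool" where
  "bilinear_form s1 s2 \<beta> \<longleftrightarrow>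
     (\<forall>y. Vector_Spaces.linear s1 (*) (\<lambda>x. \<beta> x y)) \<and> (\<forall>x. Vector_Spaces.linear s2 (*) (\<lambda>y. \<beta> x y))"

text \<open>Model of \<open>E1 \<otimes> E2\<close>: the image of the canonical (injective) map
  \<open>E1 \<otimes> E2 \<rightarrow> Bil(E1,E2;K)-dual\<close>, \<open>x \<otimes> y \<mapsto> (\<beta> \<mapsto> \<beta> x y)\<close>, i.e. the span of the
  pure tensors inside the space of functionals (functionals vanish off bilinear forms).\<close>
definition pure_tensor ::
  "('a::field \<Rightarrow> 'v::ab_group_add \<Rightarrow> 'v) \<Rightarrow> ('a \<Rightarrow> 'w::ab_group_add \<Rightarrow> 'w) \<Rightarrow> 'v \<Rightarrow> 'w \<Rightarrow> (('v \<Rightarrow> 'w \<Rightarrow> 'a) \<Rightarrow> 'a)" where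
  "pure_tensor s1 s2 x y = (\<lambda>\<beta>. if bilinear_form s1 s2 \<beta> then \<beta> x y else 0)"

definition fun_scale :: "'a::field \<Rightarrow> ('b \<Rightarrow> 'a) \<Rightarrow> ('b \<Rightarrow> 'a)" where
  "fun_scale c t = (\<lambda>\<beta>. c * t \<beta>)"

definition tensor_space ::
  "('a::field \<Rightarrow> 'v::ab_group_add \<Rightarrow> 'v) \<Rightarrow> ('a \<Rightarrow> 'w::ab_group_add \<Rightarrow> 'w) \<Rightarrow> (('v \<Rightarrow> 'w \<Rightarrow> 'a) \<Rightarrow> 'a) set" where
  "tensor_space s1 s2 = module.span fun_scale {pure_tensor s1 s2 x y | x y. True}"

definition tensor_lines ::
  "('a::field \<Rightarrow> 'v::ab_group_add \<Rightarrow> 'v) \<Rightarrow> ('a \<Rightarrow> 'w::ab_group_add \<Rightarrow> 'w) \<Rightarrow> (('v \<Rightarrow> 'w \<Rightarrow> 'a) \<Rightarrow> 'a) set set" where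
  "tensor_lines s1 s2 =
     {module.span fun_scale {t} | t. t \<in> tensor_space s1 s2 \<and> t \<noteq> 0}"

text \<open>Atoms of \<open>P(E1) \<multimap> P(E2) := (P(E1) \<circledast> P(E2)-op)-op\<close>. P(E) is ordered by inclusion,
  P(E2)-op by reverse inclusion, the \<circledast>-lattice by inclusion, its dual by reverse inclusion.\<close>
definition multimap_atoms ::
  "('a::field \<Rightarrow> 'v::ab_group_add \<Rightarrow> 'v) \<Rightarrow> ('a \<Rightarrow> 'w::ab_group_add \<Rightarrow> 'w) \<Rightarrow> ('v set \<times> 'w set) set set" where
  "multimap_atoms s1 s2 =
     lat_atoms (lat_coprod (subspaces s1) (\<subseteq>) (subspaces s2) (dual_ord (\<subseteq>)))
               (dual_ord (\<subseteq>))"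

end

theory Submission
  imports Defs
begin

(*
  A nonzero linear map u from E1 to E2 gives the relation R_u of all pairs (l, K) of a line l of E1
  and a hyperplane K of E2 with u(l) \<subseteq> K. Its columns are the lines inside the hyperplane u\<inverse>(K)
  (or all lines), its rows are the hyperplanes through u(x) for l = span {x}; so R_u lies in the
  generating family of the \<circledast>-lattice. It is maximal there: if some R \<supseteq> R_u of that family
  contained a pair outside R_u, separating vectors by hyperplanes would force first one full row,
  then all columns avoiding that row's vector, and then every row of R to be full, i.e.
  R = \<Sigma>1 \<times> \<Sigma>2. A maximal generator is an atom of the dual lattice. Separating hyperplanes also
  show that R_u determines u up to a scalar. Coordinates with respect to bases turn a tensor t into a
  linear map u_t, linearly and injectively, so span {t} \<mapsto> R_(u_t) is an injective map from lines
  to atoms.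
*)

definition line :: "('a::field \<Rightarrow> 'v::ab_group_add \<Rightarrow> 'v) \<Rightarrow> 'v set \<Rightarrow> bool" where
  "line s a \<longleftrightarrow> (\<exists>z. z \<noteq> 0 \<and> a = module.span s {z})"

definition hyperplane :: "('a::field \<Rightarrow> 'v::ab_group_add \<Rightarrow> 'v) \<Rightarrow> 'v set \<Rightarrow> bool" where
  "hyperplane s K \<longleftrightarrow> module.subspace s K \<and> K \<noteq> UNIV \<and>
     (\<forall>T. module.subspace s T \<and> K \<subseteq> T \<and> T \<noteq> K \<longrightarrow> T = UNIV)"

lemma dual_ord_dual_ord [simp]: "dual_ord (dual_ord le) = le"
  unfolding dual_ord_def by simp

lemma vector_space_field_mult: "vector_space ((*) :: 'a::field \<Rightarrow> 'a \<Rightarrow> 'a)"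
  by unfold_locales (auto simp: algebra_simps)

lemma linear_mult_right:
  "Vector_Spaces.linear s (*) f \<Longrightarrow> Vector_Spaces.linear s (*) (\<lambda>x. f x * (c :: 'a::field))"
  unfolding Vector_Spaces.linear_iff by (auto simp: algebra_simps)

lemma linear_mult_left:
  "Vector_Spaces.linear s (*) f \<Longrightarrow> Vector_Spaces.linear s (*) (\<lambda>x. (c :: 'a::field) * f x)"
  unfolding Vector_Spaces.linear_iff by (auto simp: algebra_simps)

section \<open>Lines and hyperplanes\<close>

context vector_space
begin

lemma line_span_singleton: "z \<noteq> 0 \<Longrightarrow> line scale (span {z})"
  unfolding line_def by auto

lemma lineE:
  assumes "line scale a"
  obtains z where "z \<noteq> 0" "a = span {z}"
  using assms unfolding line_def by auto

lemma span_singleton_subset_iff: "subspace K \<Longrightarrow> span {z} \<subseteq> K \<longleftrightarrow> z \<in> K"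
  using span_minimal[of "{z}" K] span_base[of z "{z}"] by auto

lemma scale_add_scale_eq_0_imp:
  assumes x: "x \<noteq> 0" and y: "y \<notin> span {x}" and eq: "a *s x + b *s y = 0"
  shows "a = 0 \<and> b = 0"
proof -
  have "b = 0"
  proof (rule ccontr)
    assume "b \<noteq> 0"
    have "b *s y = (- a) *s x" using eq by (simp add: eq_neg_iff_add_eq_0 add.commute)
    then have "inverse b *s (b *s y) = (inverse b * - a) *s x" by simp
    then have "y = (inverse b * - a) *s x" using \<open>b \<noteq> 0\<close> by simp
    then have "y \<in> span {x}" by (metis span_base span_scale singletonI)
    then show False using y by blast
  qed
  then show ?thesis using eq x by simp
qed

lemma hyperplane_subspace: "hyperplane scale K \<Longrightarrow> subspace K"
  unfolding hyperplane_def by simp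

lemma hyperplane_maximal:
  assumes "hyperplane scale K" "subspace T" "K \<subseteq> T" "T \<noteq> UNIV"
  shows "T = K"
  using assms unfolding hyperplane_def by metis

lemma hyperplane_kernel:
  assumes g: "Vector_Spaces.linear scale (*) g" and y: "g y \<noteq> 0"
  shows "hyperplane scale {x. g x = 0}"
  unfolding hyperplane_def
proof (intro conjI allI impI)
  interpret G: Vector_Spaces.linear scale "(*)" g by fact
  show "subspace {x. g x = 0}" by (rule G.subspace_kernel)
  show "{x. g x = 0} \<noteq> UNIV" using y by auto
  fix T assume T: "subspace T \<and> {x. g x = 0} \<subseteq> T \<and> T \<noteq> {x. g x = 0}"
  then obtain t where t: "t \<in> T" "g t \<noteq> 0" by blast
  have "x \<in> T" for x
  proof -
    have "g (x - (g x / g t) *s t) = 0" using t by (simp add: G.diff G.scale)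
    then have "x - (g x / g t) *s t \<in> T" using T by blast
    then have "(x - (g x / g t) *s t) + (g x / g t) *s t \<in> T"
      using T t subspace_add subspace_scale by blast
    then show ?thesis by simp
  qed
  then show "T = UNIV" by blast
qed

lemma linear_functional_separation:
  assumes S: "subspace S" and z: "z \<notin> S"
  obtains g where "Vector_Spaces.linear scale (*) g" "\<forall>x\<in>S. g x = 0" "g z = 1"
proof -
  obtain B where B: "B \<subseteq> S" "independent B" "S \<subseteq> span B"
    using maximal_independent_subset by blast
  have "z \<notin> span B" using B S z span_minimal by blast
  then have indep: "independent (insert z B)" using B(2) by (rule independent_insertI)
  interpret P: vector_space_pair scale "(*) :: 'a \<Rightarrow> 'a \<Rightarrow> 'a"
    by (simp add: vector_space_pair_def vector_space_field_mult vector_space_axioms)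
  define g where "g = P.construct (insert z B) (\<lambda>b. if b = z then 1 else 0)"
  have g: "Vector_Spaces.linear scale (*) g"
    unfolding g_def by (rule P.linear_construct[OF indep])
  have "g z = 1" and "\<forall>b\<in>B. g b = 0"
    unfolding g_def using P.construct_basis[OF indep] B(1) z by auto
  then show thesis using that g B(3) P.linear_eq_0_on_span[OF g] by blast
qed

lemma hyperplane_separation:
  assumes "subspace S" "z \<notin> S"
  obtains K where "hyperplane scale K" "S \<subseteq> K" "z \<notin> K"
proof -
  obtain g where "Vector_Spaces.linear scale (*) g" "\<forall>x\<in>S. g x = 0" "g z = 1"
    using linear_functional_separation[OF assms] .
  then show thesis using that hyperplane_kernel[of g z] by fastforce
qed

lemma hyperplane_kernelE:
  assumes K: "hyperplane scale K"
  obtains g y where "Vector_Spaces.linear scale (*) g" "g y \<noteq> 0" "K = {x. g x = 0}"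
proof -
  obtain y where y: "y \<notin> K" using K unfolding hyperplane_def by blast
  obtain g where g: "Vector_Spaces.linear scale (*) g" "\<forall>x\<in>K. g x = 0" "g y = 1"
    by (rule linear_functional_separation[OF hyperplane_subspace[OF K] y])
  have ker: "hyperplane scale {x. g x = 0}" using hyperplane_kernel[OF g(1), of y] g(3) by simp
  have "{x. g x = 0} = K"
  proof (rule hyperplane_maximal[OF K hyperplane_subspace[OF ker]])
    show "K \<subseteq> {x. g x = 0}" using g(2) by blast
    show "{x. g x = 0} \<noteq> UNIV" using ker unfolding hyperplane_def by simp
  qed
  with g(1,3) show thesis by (intro that[of g y]) auto
qed

lemma hyperplane_separation_singleton:
  assumes "y \<notin> span {w}"
  obtains K where "hyperplane scale K" "w \<in> K" "y \<notin> K"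
proof -
  obtain K where "hyperplane scale K" "span {w} \<subseteq> K" "y \<notin> K"
    by (rule hyperplane_separation[OF subspace_span assms])
  then show thesis using that span_base[of w "{w}"] by blast
qed

lemma hyperplane_avoiding_two:
  assumes w: "w \<noteq> 0" and z: "z \<noteq> 0"
  obtains K where "hyperplane scale K" "w \<notin> K" "z \<notin> K"
proof -
  interpret P: vector_space_pair scale "(*) :: 'a \<Rightarrow> 'a \<Rightarrow> 'a"
    by (simp add: vector_space_pair_def vector_space_field_mult vector_space_axioms)
  have "\<exists>g. Vector_Spaces.linear scale (*) g \<and> g w \<noteq> 0 \<and> g z \<noteq> 0"
  proof (cases "z \<in> span {w}")
    case True
    then obtain k where k: "z = k *s w" by (auto simp: span_singleton)
    have indep: "independent {w}" using w by simp
    define g where "g = P.construct {w} (\<lambda>_. 1)"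
    have lin: "Vector_Spaces.linear scale (*) g" unfolding g_def by (rule P.linear_construct[OF indep])
    have "g w = 1" unfolding g_def using P.construct_basis[OF indep] by simp
    then show ?thesis using lin k z by (intro exI[of _ g]) (auto simp: P.linear_scale[OF lin])
  next
    case False
    have indep: "independent {z, w}" using w False independent_insertI[of z "{w}"] by simp
    define g where "g = P.construct {z, w} (\<lambda>_. 1)"
    have "g w = 1" "g z = 1" unfolding g_def using P.construct_basis[OF indep] by simp_all
    moreover have "Vector_Spaces.linear scale (*) g" unfolding g_def by (rule P.linear_construct[OF indep])
    ultimately show ?thesis by auto
  qed
  then obtain g where "Vector_Spaces.linear scale (*) g" "g w \<noteq> 0" "g z \<noteq> 0" by blast
  then show thesis using that hyperplane_kernel by blast
qed

lemma in_all_hyperplanes_through: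
  assumes "\<And>K. hyperplane scale K \<Longrightarrow> w \<in> K \<Longrightarrow> z \<in> K"
  shows "z \<in> span {w}"
proof (rule ccontr)
  assume "z \<notin> span {w}"
  then obtain K where "hyperplane scale K" "w \<in> K" "z \<notin> K" by (rule hyperplane_separation_singleton)
  with assms show False by blast
qed

lemma in_all_hyperplanes_avoiding:
  assumes "w \<noteq> 0" and "\<And>K. hyperplane scale K \<Longrightarrow> w \<notin> K \<Longrightarrow> z \<in> K"
  shows "z = 0"
proof (rule ccontr)
  assume "z \<noteq> 0"
  with assms(1) obtain K where "hyperplane scale K" "w \<notin> K" "z \<notin> K" by (rule hyperplane_avoiding_two)
  with assms(2) show False by blast
qed

lemma span_singleton_inter_subspace_eq_0:
  assumes "subspace K" "w \<notin> K" "z \<in> span {w}" "z \<in> K"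
  shows "z = 0"
proof (rule ccontr)
  assume "z \<noteq> 0"
  obtain k where k: "z = k *s w" using assms(3) by (auto simp: span_singleton)
  with \<open>z \<noteq> 0\<close> have "w = inverse k *s z" by auto
  moreover have "inverse k *s z \<in> K" using assms(1,4) by (rule subspace_scale)
  ultimately show False using assms(2) by simp
qed

section \<open>The subspace lattice and its dual\<close>

lemma lat_atoms_subspaces: "lat_atoms (subspaces scale) (\<subseteq>) = {a. line scale a}"
proof (intro set_eqI iffI)
  fix a assume "a \<in> lat_atoms (subspaces scale) (\<subseteq>)"
  then have a: "subspace a" and "\<exists>x. subspace x \<and> x \<subseteq> a \<and> x \<noteq> a"
    and minimal: "\<And>x. subspace x \<Longrightarrow> x \<subseteq> a \<Longrightarrow> x \<noteq> a \<Longrightarrow> x \<subseteq> {0}"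
    unfolding lat_atoms_def subspaces_def by (auto dest: bspec[of _ _ "{0}"])
  then obtain z where z: "z \<in> a" "z \<noteq> 0" using subspace_0 by blast
  have "span {z} = a"
  proof (rule ccontr)
    assume "span {z} \<noteq> a"
    then have "span {z} \<subseteq> {0}" using minimal z a span_singleton_subset_iff by simp
    then show False using z span_base[of z "{z}"] by auto
  qed
  then show "a \<in> {a. line scale a}" using z unfolding line_def by auto
next
  fix a assume "a \<in> {a. line scale a}"
  then obtain z where z: "z \<noteq> 0" "a = span {z}" by (auto elim: lineE)
  have minimal: "x \<subseteq> {0}" if x: "subspace x" "x \<subseteq> a" "x \<noteq> a" for x
  proof
    fix y assume y: "y \<in> x"
    then obtain k where k: "y = k *s z" using x(2) y z(2) by (auto simp: span_singleton)
    show "y \<in> {0}"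
    proof (rule ccontr)
      assume "y \<notin> {0}"
      then have "z \<in> x" using subspace_scale[of x y "inverse k"] x y k by auto
      then show False using x z span_singleton_subset_iff by auto
    qed
  qed
  have "{0} \<subseteq> a" "{0} \<noteq> a" using z span_zero span_base[of z "{z}"] by auto
  then show "a \<in> lat_atoms (subspaces scale) (\<subseteq>)"
    unfolding lat_atoms_def subspaces_def mem_Collect_eq
  proof (intro conjI bexI[of _ "{0}"] ballI impI)
    show "subspace a" "{0} \<in> Collect subspace" using z(2) subspace_single_0 by simp_all
  next
    fix x y assume "x \<in> Collect subspace" "x \<subseteq> a \<and> x \<noteq> a" "y \<in> Collect subspace"
    then show "x \<subseteq> y" using minimal subspace_0 by blast
  qed
qed

lemma lat_atoms_subspaces_dual: "lat_atoms (subspaces scale) (dual_ord (\<subseteq>)) = {K. hyperplane scale K}"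
proof (intro set_eqI iffI)
  fix K assume "K \<in> lat_atoms (subspaces scale) (dual_ord (\<subseteq>))"
  then have "subspace K" "\<exists>x. subspace x \<and> K \<subseteq> x \<and> x \<noteq> K"
    and "\<And>x. subspace x \<Longrightarrow> K \<subseteq> x \<Longrightarrow> x \<noteq> K \<Longrightarrow> UNIV \<subseteq> x"
    unfolding lat_atoms_def subspaces_def dual_ord_def by (auto dest: bspec[of _ _ UNIV])
  then show "K \<in> {K. hyperplane scale K}" unfolding hyperplane_def by auto
next
  fix K assume "K \<in> {K. hyperplane scale K}"
  then have K: "subspace K" "K \<noteq> UNIV" "\<And>T. subspace T \<Longrightarrow> K \<subseteq> T \<Longrightarrow> T \<noteq> K \<Longrightarrow> T = UNIV"
    unfolding hyperplane_def by auto
  show "K \<in> lat_atoms (subspaces scale) (dual_ord (\<subseteq>))"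
    unfolding lat_atoms_def subspaces_def dual_ord_def mem_Collect_eq
  proof (intro conjI bexI[of _ UNIV] ballI impI)
    show "subspace K" "UNIV \<in> Collect subspace" using K(1) by simp_all
  next
    fix x y assume "x \<in> Collect subspace" "K \<subseteq> x \<and> x \<noteq> K" "y \<in> Collect subspace"
    then show "y \<subseteq> x" using K(3)[of x] by auto
  qed (use K(2) in auto)
qed

lemma lat_top_subspaces: "lat_top (subspaces scale) (\<subseteq>) = UNIV"
  unfolding lat_top_def subspaces_def by (rule the_equality) (auto dest: spec[of _ UNIV])

lemma lat_top_subspaces_dual: "lat_top (subspaces scale) (dual_ord (\<subseteq>)) = {0}"
  unfolding lat_top_def subspaces_def dual_ord_def
  by (rule the_equality) (auto dest: subspace_0 intro: subspace_single_0)

lemma atoms_below_subspaces: "atoms_below (subspaces scale) (\<subseteq>) H = {a. line scale a \<and> a \<subseteq> H}"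
  unfolding atoms_below_def lat_atoms_subspaces by auto

lemma atoms_below_subspaces_dual:
  "atoms_below (subspaces scale) (dual_ord (\<subseteq>)) m = {K. hyperplane scale K \<and> m \<subseteq> K}"
  unfolding atoms_below_def lat_atoms_subspaces_dual by (auto simp: dual_ord_def)

lemma lat_Cl_subspaces_coatoms_top:
  "lat_Cl (subspaces scale) (\<subseteq>) (lat_coatoms (subspaces scale) (\<subseteq>) \<union> {lat_top (subspaces scale) (\<subseteq>)})
     = {{a. line scale a \<and> a \<subseteq> H} | H. hyperplane scale H \<or> H = UNIV}"
  unfolding lat_Cl_def lat_coatoms_def lat_atoms_subspaces_dual lat_top_subspaces atoms_below_subspaces
  by auto

text \<open>Nonzero \<open>w\<close> give \<open>\<Sigma>[span {w}]\<close> for the lines \<open>span {w}\<close>; \<open>w = 0\<close> gives \<open>\<Sigma>[{0}]\<close> for the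
  top element \<open>{0}\<close> of the dual lattice.\<close>

lemma lat_Cl_subspaces_dual_coatoms_top:
  "lat_Cl (subspaces scale) (dual_ord (\<subseteq>))
     (lat_coatoms (subspaces scale) (dual_ord (\<subseteq>)) \<union> {lat_top (subspaces scale) (dual_ord (\<subseteq>))})
     = range (\<lambda>w. {K. hyperplane scale K \<and> w \<in> K})"
proof -
  have below_span: "{K. hyperplane scale K \<and> span {w} \<subseteq> K} = {K. hyperplane scale K \<and> w \<in> K}" for w
    using span_singleton_subset_iff hyperplane_subspace by blast
  have "lat_Cl (subspaces scale) (dual_ord (\<subseteq>))
     (lat_coatoms (subspaces scale) (dual_ord (\<subseteq>)) \<union> {lat_top (subspaces scale) (dual_ord (\<subseteq>))})
     = {{K. hyperplane scale K \<and> m \<subseteq> K} | m. line scale m \<or> m = {0}}"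
    unfolding lat_Cl_def lat_coatoms_def dual_ord_dual_ord lat_atoms_subspaces lat_top_subspaces_dual
      atoms_below_subspaces_dual
    by auto
  also have "\<dots> = range (\<lambda>w. {K. hyperplane scale K \<and> w \<in> K})"
  proof (intro set_eqI iffI)
    fix X assume "X \<in> {{K. hyperplane scale K \<and> m \<subseteq> K} | m. line scale m \<or> m = {0}}"
    then show "X \<in> range (\<lambda>w. {K. hyperplane scale K \<and> w \<in> K})"
      using below_span[of 0] by (auto elim!: lineE simp: below_span)
  next
    fix X assume "X \<in> range (\<lambda>w. {K. hyperplane scale K \<and> w \<in> K})"
    then obtain w where "X = {K. hyperplane scale K \<and> span {w} \<subseteq> K}" by (auto simp: below_span)
    then show "X \<in> {{K. hyperplane scale K \<and> m \<subseteq> K} | m. line scale m \<or> m = {0}}"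
      using line_span_singleton by (cases "w = 0") auto
  qed
  finally show ?thesis .
qed

end

lemma sigma_coprod_subset: "R \<in> sigma_coprod L1 le1 L2 le2 \<Longrightarrow> R \<subset> lat_atoms L1 le1 \<times> lat_atoms L2 le2"
  unfolding sigma_coprod_def mem_Collect_eq by (elim conjE)

lemma mem_lat_coprod_iff:
  "X \<in> lat_coprod L1 le1 L2 le2 \<longleftrightarrow>
   (\<exists>\<omega>. X = (lat_atoms L1 le1 \<times> lat_atoms L2 le2) \<inter> \<Inter>\<omega> \<and>
        \<omega> \<subseteq> sigma_coprod L1 le1 L2 le2 \<union> {lat_atoms L1 le1 \<times> lat_atoms L2 le2})"
  unfolding lat_coprod_def by (rule mem_Collect_eq)

lemma maximal_sigma_coprod_dual_atom:
  assumes R: "R \<in> sigma_coprod L1 le1 L2 le2"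
    and maximal: "\<And>R'. R' \<in> sigma_coprod L1 le1 L2 le2 \<Longrightarrow> R \<subseteq> R' \<Longrightarrow> R' \<subseteq> R"
  shows "R \<in> lat_atoms (lat_coprod L1 le1 L2 le2) (dual_ord (\<subseteq>))"
proof -
  define S where "S = lat_atoms L1 le1 \<times> lat_atoms L2 le2"
  have RS: "R \<subset> S" unfolding S_def using R by (rule sigma_coprod_subset)
  have R_in: "R \<in> lat_coprod L1 le1 L2 le2"
    unfolding mem_lat_coprod_iff S_def[symmetric] using R RS by (intro exI[of _ "{R}"]) auto
  have S_in: "S \<in> lat_coprod L1 le1 L2 le2"
    unfolding mem_lat_coprod_iff S_def[symmetric] by (intro exI[of _ "{}"]) simp
  have below_S: "y \<subseteq> S" if "y \<in> lat_coprod L1 le1 L2 le2" for y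
    using that unfolding mem_lat_coprod_iff S_def[symmetric] by auto
  have S_below: "S \<subseteq> x" if x: "x \<in> lat_coprod L1 le1 L2 le2" "R \<subseteq> x" "x \<noteq> R" for x
  proof -
    obtain \<omega> where \<omega>: "x = S \<inter> \<Inter>\<omega>" "\<omega> \<subseteq> sigma_coprod L1 le1 L2 le2 \<union> {S}"
      using x(1) unfolding mem_lat_coprod_iff S_def[symmetric] by blast
    have "R' = S" if "R' \<in> \<omega>" for R'
    proof (rule ccontr)
      assume "R' \<noteq> S"
      then have "R' \<subseteq> R" using maximal \<omega>(2) x(2) that unfolding \<omega>(1) by blast
      then show False using x(2,3) that unfolding \<omega>(1) by blast
    qed
    then show "S \<subseteq> x" unfolding \<omega>(1) by blast
  qed
  show ?thesis
    unfolding lat_atoms_def dual_ord_def mem_Collect_eq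
  proof (intro conjI bexI[of _ S] ballI impI)
    fix x y assume "x \<in> lat_coprod L1 le1 L2 le2" "R \<subseteq> x \<and> x \<noteq> R" "y \<in> lat_coprod L1 le1 L2 le2"
    then show "y \<subseteq> x" using S_below below_S by blast
  qed (use R_in S_in RS in auto)
qed

section \<open>Nonzero linear maps give atoms\<close>

definition maps_into_rel ::
  "('a::field \<Rightarrow> 'v::ab_group_add \<Rightarrow> 'v) \<Rightarrow> ('a \<Rightarrow> 'w::ab_group_add \<Rightarrow> 'w) \<Rightarrow>
   ('v \<Rightarrow> 'w) \<Rightarrow> ('v set \<times> 'w set) set" where
  "maps_into_rel s1 s2 u = {(l, K). line s1 l \<and> hyperplane s2 K \<and> u ` l \<subseteq> K}"

context vector_space_pair
begin

lemma sigma_coprod_subspaces_iff: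
  "R \<in> sigma_coprod (subspaces s1) (\<subseteq>) (subspaces s2) (dual_ord (\<subseteq>)) \<longleftrightarrow>
   R \<subset> {l. line s1 l} \<times> {K. hyperplane s2 K} \<and>
   (\<forall>p1 p2. line s1 p1 \<longrightarrow> hyperplane s2 p2 \<longrightarrow>
      (\<exists>H. {q1. (q1, p2) \<in> R} = {a. line s1 a \<and> a \<subseteq> H} \<and> (hyperplane s1 H \<or> H = UNIV)) \<and>
      (\<exists>w. {q2. (p1, q2) \<in> R} = {K. hyperplane s2 K \<and> w \<in> K}))"
  unfolding sigma_coprod_def vs1.lat_atoms_subspaces vs2.lat_atoms_subspaces_dual
    vs1.lat_Cl_subspaces_coatoms_top vs2.lat_Cl_subspaces_dual_coatoms_top
  by (simp add: Ball_def image_iff)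

lemma sigma_coprod_subspacesE:
  assumes "R \<in> sigma_coprod (subspaces s1) (\<subseteq>) (subspaces s2) (dual_ord (\<subseteq>))"
    and "line s1 l" "hyperplane s2 K"
  obtains w H where "\<And>K'. (l, K') \<in> R \<longleftrightarrow> hyperplane s2 K' \<and> w \<in> K'"
    and "\<And>l'. (l', K) \<in> R \<longleftrightarrow> line s1 l' \<and> l' \<subseteq> H" and "hyperplane s1 H \<or> H = UNIV"
proof -
  from assms(1)[unfolded sigma_coprod_subspaces_iff, THEN conjunct2, rule_format, OF assms(2,3)]
  obtain w H where row: "{q2. (l, q2) \<in> R} = {K'. hyperplane s2 K' \<and> w \<in> K'}"
    and column: "{q1. (q1, K) \<in> R} = {l'. line s1 l' \<and> l' \<subseteq> H}" and H: "hyperplane s1 H \<or> H = UNIV"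
    by blast
  show thesis
    by (rule that[OF _ _ H]) (use row column in \<open>simp_all add: set_eq_iff\<close>)
qed

lemma hyperplane_vimage:
  assumes u: "Vector_Spaces.linear s1 s2 u" and K: "hyperplane s2 K" and "u -` K \<noteq> UNIV"
  shows "hyperplane s1 (u -` K)"
proof -
  obtain g y where g: "Vector_Spaces.linear s2 (*) g" "g y \<noteq> 0" "K = {x. g x = 0}"
    using K by (rule vs2.hyperplane_kernelE)
  have "Vector_Spaces.linear s1 (*) (\<lambda>x. g (u x))"
    using Vector_Spaces.linear_compose[OF u g(1)] by (simp add: o_def)
  moreover obtain x where "g (u x) \<noteq> 0" using assms(3) g(3) by auto
  ultimately have "hyperplane s1 {x. g (u x) = 0}" by (rule vs1.hyperplane_kernel)
  then show ?thesis using g(3) by (simp add: vimage_def)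
qed

lemma image_span_singleton_subset_iff:
  assumes "Vector_Spaces.linear s1 s2 u" "vs2.subspace K"
  shows "u ` vs1.span {z} \<subseteq> K \<longleftrightarrow> u z \<in> K"
  using linear_span_image[OF assms(1), of "{z}", symmetric] vs2.span_singleton_subset_iff[OF assms(2)]
  by simp

lemma span_singleton_in_maps_into_rel_iff:
  assumes "Vector_Spaces.linear s1 s2 u" "z \<noteq> 0"
  shows "(vs1.span {z}, K) \<in> maps_into_rel s1 s2 u \<longleftrightarrow> hyperplane s2 K \<and> u z \<in> K"
proof -
  have "line s1 (vs1.span {z})" using assms(2) by (rule vs1.line_span_singleton)
  then show ?thesis
    unfolding maps_into_rel_def
    using image_span_singleton_subset_iff[OF assms(1) vs2.hyperplane_subspace] by auto
qed

lemma maps_into_rel_sigma_coprod: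
  assumes u: "Vector_Spaces.linear s1 s2 u" and a0: "u a0 \<noteq> 0"
  shows "maps_into_rel s1 s2 u \<in> sigma_coprod (subspaces s1) (\<subseteq>) (subspaces s2) (dual_ord (\<subseteq>))"
  unfolding sigma_coprod_subspaces_iff
proof (intro conjI allI impI)
  have "a0 \<noteq> 0" using a0 linear_0[OF u] by auto
  obtain K0 where K0: "hyperplane s2 K0" "u a0 \<notin> K0" using vs2.hyperplane_avoiding_two[OF a0 a0] by blast
  have "(vs1.span {a0}, K0) \<notin> maps_into_rel s1 s2 u"
    using span_singleton_in_maps_into_rel_iff[OF u \<open>a0 \<noteq> 0\<close>] K0 by blast
  moreover have "line s1 (vs1.span {a0})" using \<open>a0 \<noteq> 0\<close> by (rule vs1.line_span_singleton)
  ultimately show "maps_into_rel s1 s2 u \<subset> {l. line s1 l} \<times> {K. hyperplane s2 K}"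
    using K0 unfolding maps_into_rel_def by blast
next
  fix p1 p2 assume p1: "line s1 p1" and p2: "hyperplane s2 p2"
  have "hyperplane s1 (u -` p2) \<or> u -` p2 = UNIV" using hyperplane_vimage[OF u p2] by blast
  moreover have "{q1. (q1, p2) \<in> maps_into_rel s1 s2 u} = {a. line s1 a \<and> a \<subseteq> u -` p2}"
    unfolding maps_into_rel_def using p2 by auto
  ultimately show "\<exists>H. {q1. (q1, p2) \<in> maps_into_rel s1 s2 u} = {a. line s1 a \<and> a \<subseteq> H} \<and>
      (hyperplane s1 H \<or> H = UNIV)" by blast
  obtain z where "z \<noteq> 0" "p1 = vs1.span {z}" using p1 by (rule vs1.lineE)
  then have "{q2. (p1, q2) \<in> maps_into_rel s1 s2 u} = {K. hyperplane s2 K \<and> u z \<in> K}"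
    using span_singleton_in_maps_into_rel_iff[OF u] by auto
  then show "\<exists>w. {q2. (p1, q2) \<in> maps_into_rel s1 s2 u} = {K. hyperplane s2 K \<and> w \<in> K}" by blast
qed

context
  fixes u :: "'b \<Rightarrow> 'c" and R and a0 :: 'b
  assumes u: "Vector_Spaces.linear s1 s2 u"
    and R: "R \<in> sigma_coprod (subspaces s1) (\<subseteq>) (subspaces s2) (dual_ord (\<subseteq>))"
    and sub: "maps_into_rel s1 s2 u \<subseteq> R"
    and a0: "a0 \<noteq> 0"
begin

lemma span_singleton_in_sigma_coprod:
  "z \<noteq> 0 \<Longrightarrow> hyperplane s2 K \<Longrightarrow> u z \<in> K \<Longrightarrow> (vs1.span {z}, K) \<in> R"
  using sub span_singleton_in_maps_into_rel_iff[OF u] by blast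

lemma sigma_coprod_row_full:
  assumes K0: "hyperplane s2 K0" "(vs1.span {a0}, K0) \<in> R" "u a0 \<notin> K0" and K: "hyperplane s2 K"
  shows "(vs1.span {a0}, K) \<in> R"
proof -
  obtain w where w: "\<And>K'. (vs1.span {a0}, K') \<in> R \<longleftrightarrow> hyperplane s2 K' \<and> w \<in> K'"
    using sigma_coprod_subspacesE[OF R vs1.line_span_singleton[OF a0] K0(1)] by metis
  have "w \<in> vs2.span {u a0}"
    using w span_singleton_in_sigma_coprod[OF a0] by (intro vs2.in_all_hyperplanes_through) blast
  moreover have "w \<in> K0" using w K0(2) by blast
  ultimately have "w = 0"
    using vs2.span_singleton_inter_subspace_eq_0[OF vs2.hyperplane_subspace[OF K0(1)] K0(3)] by blast
  then show ?thesis using w K vs2.subspace_0[OF vs2.hyperplane_subspace[OF K]] by blast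
qed

lemma sigma_coprod_column_full:
  assumes row: "\<And>K. hyperplane s2 K \<Longrightarrow> (vs1.span {a0}, K) \<in> R"
    and l: "line s1 l" and K: "hyperplane s2 K" "u a0 \<notin> K"
  shows "(l, K) \<in> R"
proof -
  obtain H where H: "\<And>l'. (l', K) \<in> R \<longleftrightarrow> line s1 l' \<and> l' \<subseteq> H" "hyperplane s1 H \<or> H = UNIV"
    using sigma_coprod_subspacesE[OF R l K(1)] by metis
  have hyp: "hyperplane s1 (u -` K)" using hyperplane_vimage[OF u K(1)] K(2) by blast
  have "u -` K \<subseteq> H"
  proof
    fix y assume y: "y \<in> u -` K"
    show "y \<in> H"
    proof (cases "y = 0")
      case True
      then show ?thesis using H(2) vs1.subspace_0[OF vs1.hyperplane_subspace] by blast
    next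
      case False
      then have "vs1.span {y} \<subseteq> H" using H(1) span_singleton_in_sigma_coprod K(1) y by blast
      then show ?thesis using vs1.span_base[of y "{y}"] by blast
    qed
  qed
  moreover have "a0 \<in> H" using H(1) row[OF K(1)] vs1.span_base[of a0 "{a0}"] by blast
  ultimately have "H = UNIV"
    using H(2) vs1.hyperplane_maximal[OF hyp vs1.hyperplane_subspace] K(2) by blast
  then show ?thesis using H(1) l by blast
qed

end

lemma maps_into_rel_maximal:
  assumes u: "Vector_Spaces.linear s1 s2 u"
    and R: "R \<in> sigma_coprod (subspaces s1) (\<subseteq>) (subspaces s2) (dual_ord (\<subseteq>))"
    and sub: "maps_into_rel s1 s2 u \<subseteq> R"
  shows "R \<subseteq> maps_into_rel s1 s2 u"
proof (rule ccontr)
  assume "\<not> R \<subseteq> maps_into_rel s1 s2 u"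
  then obtain l0 K0 where lK0: "(l0, K0) \<in> R" "(l0, K0) \<notin> maps_into_rel s1 s2 u" by auto
  have R_sub: "R \<subset> {l. line s1 l} \<times> {K. hyperplane s2 K}"
    using R unfolding sigma_coprod_subspaces_iff by (rule conjunct1)
  then have l0: "line s1 l0" and K0: "hyperplane s2 K0" using lK0(1) by auto
  obtain a0 where a0: "a0 \<noteq> 0" "l0 = vs1.span {a0}" using l0 by (rule vs1.lineE)
  have "u a0 \<notin> K0" using lK0 span_singleton_in_maps_into_rel_iff[OF u a0(1)] K0 a0(2) by blast
  then have "u a0 \<noteq> 0" using vs2.subspace_0[OF vs2.hyperplane_subspace[OF K0]] by auto
  have row_l0: "(vs1.span {a0}, K) \<in> R" if "hyperplane s2 K" for K
    using sigma_coprod_row_full[OF u R sub a0(1) K0 _ \<open>u a0 \<notin> K0\<close> that] lK0(1) a0(2) by blast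
  have "(l, K) \<in> R" if l: "line s1 l" and K: "hyperplane s2 K" for l K
  proof -
    obtain w where w: "\<And>K'. (l, K') \<in> R \<longleftrightarrow> hyperplane s2 K' \<and> w \<in> K'"
      using sigma_coprod_subspacesE[OF R l K] by metis
    have "w \<in> K'" if "hyperplane s2 K'" "u a0 \<notin> K'" for K'
      using sigma_coprod_column_full[OF u R sub a0(1) row_l0 l that] w by blast
    then have "w = 0" by (rule vs2.in_all_hyperplanes_avoiding[OF \<open>u a0 \<noteq> 0\<close>])
    then show ?thesis using w K vs2.subspace_0[OF vs2.hyperplane_subspace[OF K]] by blast
  qed
  then show False using R_sub by blast
qed

lemma maps_into_rel_dual_atom:
  assumes "Vector_Spaces.linear s1 s2 u" "u a0 \<noteq> 0"
  shows "maps_into_rel s1 s2 u \<in> multimap_atoms s1 s2"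
  unfolding multimap_atoms_def
  using maps_into_rel_sigma_coprod[OF assms] maps_into_rel_maximal[OF assms(1)]
  by (rule maximal_sigma_coprod_dual_atom)

lemma linear_proportional_if_pointwise:
  assumes u: "Vector_Spaces.linear s1 s2 u" and v: "Vector_Spaces.linear s1 s2 v"
    and pw: "\<And>x. v x \<in> vs2.span {u x}"
  obtains c where "\<And>x. v x = c *b u x"
proof (cases "\<forall>x. u x = 0")
  case True
  then show thesis using that[of 0] pw by simp
next
  case False
  then obtain x0 where x0: "u x0 \<noteq> 0" by blast
  obtain c where c: "v x0 = c *b u x0" using pw[of x0] by (auto simp: vs2.span_singleton)
  have "v y = c *b u y" for y
  proof (cases "u y \<in> vs2.span {u x0}")
    case True
    then obtain e where e: "u y = e *b u x0" by (auto simp: vs2.span_singleton)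
    then have "u (y - e *a x0) = 0" by (simp add: linear_diff[OF u] linear_scale[OF u])
    then have "v (y - e *a x0) = 0" using pw[of "y - e *a x0"] by simp
    then have "v y = e *b v x0" by (simp add: linear_diff[OF v] linear_scale[OF v])
    then show ?thesis using c e by (simp add: mult.commute)
  next
    case False
    obtain d where d: "v y = d *b u y" using pw[of y] by (auto simp: vs2.span_singleton)
    obtain f where f: "v (x0 + y) = f *b u (x0 + y)" using pw by (auto simp: vs2.span_singleton)
    have "(f - c) *b u x0 + (f - d) *b u y = 0"
      using f c d by (simp add: linear_add[OF u] linear_add[OF v] algebra_simps vs2.scale_left_diff_distrib)
    then have "f - c = 0 \<and> f - d = 0" by (rule vs2.scale_add_scale_eq_0_imp[OF x0 False])
    then show ?thesis using d by auto
  qed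
  then show thesis by (rule that)
qed

lemma maps_into_rel_eq_imp_proportional:
  assumes u: "Vector_Spaces.linear s1 s2 u" and v: "Vector_Spaces.linear s1 s2 v"
    and eq: "maps_into_rel s1 s2 u = maps_into_rel s1 s2 v"
  obtains c where "\<And>x. v x = c *b u x"
proof (rule linear_proportional_if_pointwise[OF u v])
  fix x show "v x \<in> vs2.span {u x}"
  proof (rule ccontr)
    assume "v x \<notin> vs2.span {u x}"
    then obtain K where K: "hyperplane s2 K" "u x \<in> K" "v x \<notin> K"
      by (rule vs2.hyperplane_separation_singleton)
    moreover have "x \<noteq> 0" using K(2,3) linear_0[OF u] linear_0[OF v] by auto
    ultimately show False
      using eq span_singleton_in_maps_into_rel_iff[OF u] span_singleton_in_maps_into_rel_iff[OF v] by blast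
  qed
qed (use that in blast)

lemma maps_into_rel_scale_subset:
  "maps_into_rel s1 s2 u \<subseteq> maps_into_rel s1 s2 (\<lambda>x. k *b u x)"
  unfolding maps_into_rel_def using vs2.subspace_scale vs2.hyperplane_subspace by blast

end

section \<open>Tensors as linear maps\<close>

global_interpretation fs: vector_space "fun_scale :: 'a::field \<Rightarrow> ('b \<Rightarrow> 'a) \<Rightarrow> 'b \<Rightarrow> 'a"
  by unfold_locales (auto simp: fun_scale_def algebra_simps fun_eq_iff)

context finite_dimensional_vector_space_pair
begin

definition coord_form :: "'b \<Rightarrow> 'c \<Rightarrow> 'b \<Rightarrow> 'c \<Rightarrow> 'a" where
  "coord_form b1 b2 = (\<lambda>x y. vs1.representation B1 x b1 * vs2.representation B2 y b2)"

lemma bilinear_form_coord_form: "bilinear_form s1 s2 (coord_form b1 b2)"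
proof -
  have "Vector_Spaces.linear s1 (*) (\<lambda>x. vs1.representation B1 x b1)"
    by (rule vs1.linear_representation[OF vs1.independent_Basis vs1.span_Basis])
  moreover have "Vector_Spaces.linear s2 (*) (\<lambda>y. vs2.representation B2 y b2)"
    by (rule vs2.linear_representation[OF vs2.independent_Basis vs2.span_Basis])
  ultimately show ?thesis
    unfolding bilinear_form_def coord_form_def
    by (intro conjI allI linear_mult_right linear_mult_left)
qed

lemma bilinear_form_expansion:
  assumes \<beta>: "bilinear_form s1 s2 \<beta>"
  shows "\<beta> x y = (\<Sum>b1\<in>B1. \<Sum>b2\<in>B2. \<beta> b1 b2 * coord_form b1 b2 x y)"
proof -
  have left: "\<beta> x' y' = (\<Sum>b1\<in>B1. vs1.representation B1 x' b1 * \<beta> b1 y')" for x' y'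
  proof -
    interpret L: Vector_Spaces.linear s1 "(*)" "\<lambda>x. \<beta> x y'" using \<beta> unfolding bilinear_form_def by blast
    have "x' = (\<Sum>b1\<in>B1. vs1.representation B1 x' b1 *a b1)"
      using vs1.sum_representation_eq[OF vs1.independent_Basis _ vs1.finite_Basis order_refl]
      by (simp add: vs1.span_Basis)
    then have "\<beta> x' y' = \<beta> (\<Sum>b1\<in>B1. vs1.representation B1 x' b1 *a b1) y'"
      by (rule arg_cong)
    then show ?thesis by (simp only: L.sum L.scale)
  qed
  have right: "\<beta> x' y' = (\<Sum>b2\<in>B2. vs2.representation B2 y' b2 * \<beta> x' b2)" for x' y'
  proof -
    interpret L: Vector_Spaces.linear s2 "(*)" "\<lambda>y. \<beta> x' y" using \<beta> unfolding bilinear_form_def by blast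
    have "y' = (\<Sum>b2\<in>B2. vs2.representation B2 y' b2 *b b2)"
      using vs2.sum_representation_eq[OF vs2.independent_Basis _ vs2.finite_Basis order_refl]
      by (simp add: vs2.span_Basis)
    then have "\<beta> x' y' = \<beta> x' (\<Sum>b2\<in>B2. vs2.representation B2 y' b2 *b b2)"
      by (rule arg_cong)
    then show ?thesis by (simp only: L.sum L.scale)
  qed
  have "\<beta> x y = (\<Sum>b1\<in>B1. vs1.representation B1 x b1 * (\<Sum>b2\<in>B2. vs2.representation B2 y b2 * \<beta> b1 b2))"
    by (subst left) (simp only: right[symmetric])
  then show ?thesis by (simp add: coord_form_def sum_distrib_left ac_simps)
qed

lemma tensor_space_expansion:
  assumes "t \<in> tensor_space s1 s2"
  shows "t \<beta> = (if bilinear_form s1 s2 \<beta>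
                  then \<Sum>b1\<in>B1. \<Sum>b2\<in>B2. \<beta> b1 b2 * t (coord_form b1 b2) else 0)"
  using assms unfolding tensor_space_def
proof (induction arbitrary: \<beta> rule: fs.span_induct)
  case base
  show ?case
    by (rule fs.subspaceI)
      (simp_all add: fun_scale_def sum.distrib sum_distrib_left algebra_simps)
next
  case (step t)
  then obtain x y where "t = pure_tensor s1 s2 x y" by blast
  then show ?case
    using bilinear_form_expansion bilinear_form_coord_form by (simp add: pure_tensor_def)
qed

lemma tensor_space_eq_0I:
  assumes "t \<in> tensor_space s1 s2" and "\<And>b1 b2. b1 \<in> B1 \<Longrightarrow> b2 \<in> B2 \<Longrightarrow> t (coord_form b1 b2) = 0"
  shows "t = 0"
proof
  fix \<beta> show "t \<beta> = 0 \<beta>"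
    using tensor_space_expansion[OF assms(1), of \<beta>] assms(2) by simp
qed

lemma sum_scale_Basis_eqD:
  assumes "(\<Sum>b\<in>B2. f b *b b) = (\<Sum>b\<in>B2. g b *b b)" and "b \<in> B2"
  shows "f b = g b"
proof -
  have "(\<Sum>b\<in>B2. (f b - g b) *b b) = 0"
    using assms(1) by (simp add: vs2.scale_left_diff_distrib sum_subtractf)
  then have "f b - g b = 0"
    by (rule vs2.independentD[where u="\<lambda>b. f b - g b", OF vs2.independent_Basis vs2.finite_Basis
          order_refl _ assms(2)])
  then show ?thesis by simp
qed

text \<open>For a pure tensor \<open>x \<otimes> y\<close> this is \<open>z \<mapsto> \<langle>z, x\<rangle> y\<close>, where \<open>\<langle>-, -\<rangle>\<close> is the
  coordinate inner product with respect to \<open>B1\<close>.\<close>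

definition tensor_to_map :: "(('b \<Rightarrow> 'c \<Rightarrow> 'a) \<Rightarrow> 'a) \<Rightarrow> 'b \<Rightarrow> 'c" where
  "tensor_to_map t = construct B1 (\<lambda>b1. \<Sum>b2\<in>B2. t (coord_form b1 b2) *b b2)"

lemma linear_tensor_to_map: "Vector_Spaces.linear s1 s2 (tensor_to_map t)"
  unfolding tensor_to_map_def by (rule linear_construct[OF vs1.independent_Basis])

lemma tensor_to_map_Basis: "b1 \<in> B1 \<Longrightarrow> tensor_to_map t b1 = (\<Sum>b2\<in>B2. t (coord_form b1 b2) *b b2)"
  unfolding tensor_to_map_def by (rule construct_basis[OF vs1.independent_Basis])

lemma tensor_to_map_scale: "tensor_to_map (fun_scale k t) x = k *b tensor_to_map t x"
proof -
  have "tensor_to_map (fun_scale k t) = construct B1 (\<lambda>b1. k *b (\<Sum>b2\<in>B2. t (coord_form b1 b2) *b b2))"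
    unfolding tensor_to_map_def
    by (rule construct_cong) (simp add: fun_scale_def vs2.scale_sum_right)
  then show ?thesis unfolding tensor_to_map_def by (simp add: construct_scale[OF vs1.independent_Basis])
qed

lemma tensor_to_map_eq_scale_imp:
  assumes t: "t \<in> tensor_space s1 s2" and t': "t' \<in> tensor_space s1 s2"
    and eq: "\<And>x. tensor_to_map t' x = c *b tensor_to_map t x"
  shows "t' = fun_scale c t"
proof -
  have "t' (coord_form b1 b2) = c * t (coord_form b1 b2)" if "b1 \<in> B1" "b2 \<in> B2" for b1 b2
  proof -
    have "(\<Sum>b\<in>B2. t' (coord_form b1 b) *b b) = (\<Sum>b\<in>B2. (c * t (coord_form b1 b)) *b b)"
      using eq[of b1] tensor_to_map_Basis[OF that(1)] by (simp add: vs2.scale_sum_right)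
    then show ?thesis
      by (rule sum_scale_Basis_eqD[where f="\<lambda>b. t' (coord_form b1 b)" and g="\<lambda>b. c * t (coord_form b1 b)",
            OF _ that(2)])
  qed
  moreover have "t' - fun_scale c t \<in> tensor_space s1 s2"
    using t t' unfolding tensor_space_def by (intro fs.span_diff fs.span_scale)
  ultimately have "t' - fun_scale c t = 0"
    by (intro tensor_space_eq_0I) (auto simp: fun_scale_def)
  then show ?thesis by simp
qed

lemma tensor_to_map_eq_0_imp:
  assumes "t \<in> tensor_space s1 s2" "tensor_to_map t = 0"
  shows "t = 0"
proof -
  have "t = fun_scale 0 t" using tensor_to_map_eq_scale_imp[OF assms(1) assms(1)] assms(2) by simp
  then show ?thesis by (simp add: fun_scale_def zero_fun_def)
qed

text \<open>Intersecting over the whole line avoids choosing a generator.\<close>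

definition tensor_line_rel :: "(('b \<Rightarrow> 'c \<Rightarrow> 'a) \<Rightarrow> 'a) set \<Rightarrow> ('b set \<times> 'c set) set" where
  "tensor_line_rel L = (\<Inter>t\<in>L. maps_into_rel s1 s2 (tensor_to_map t))"

lemma tensor_line_rel_span_singleton:
  "tensor_line_rel (fs.span {t}) = maps_into_rel s1 s2 (tensor_to_map t)"
proof (rule antisym)
  have "fun_scale 1 t = t" by (simp add: fun_scale_def)
  then show "tensor_line_rel (fs.span {t}) \<subseteq> maps_into_rel s1 s2 (tensor_to_map t)"
    unfolding tensor_line_rel_def using fs.span_base[of t "{t}"] by blast
  have "tensor_to_map (fun_scale k t) = (\<lambda>x. k *b tensor_to_map t x)" for k
    by (rule ext) (rule tensor_to_map_scale)
  then have "maps_into_rel s1 s2 (tensor_to_map t) \<subseteq> maps_into_rel s1 s2 (tensor_to_map (fun_scale k t))" for k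
    using maps_into_rel_scale_subset by simp
  then show "maps_into_rel s1 s2 (tensor_to_map t) \<subseteq> tensor_line_rel (fs.span {t})"
    unfolding tensor_line_rel_def fs.span_singleton by blast
qed

lemma tensor_span_subset_if_maps_into_rel_eq:
  assumes "t \<in> tensor_space s1 s2" "t' \<in> tensor_space s1 s2"
    and "maps_into_rel s1 s2 (tensor_to_map t) = maps_into_rel s1 s2 (tensor_to_map t')"
  shows "fs.span {t'} \<subseteq> fs.span {t}"
proof -
  obtain c where "\<And>x. tensor_to_map t' x = c *b tensor_to_map t x"
    using maps_into_rel_eq_imp_proportional[OF linear_tensor_to_map linear_tensor_to_map assms(3)] by blast
  then have "t' = fun_scale c t" by (rule tensor_to_map_eq_scale_imp[OF assms(1,2)])
  then have "t' \<in> fs.span {t}" using fs.span_scale[OF fs.span_base[of t "{t}"]] by simp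
  then show ?thesis using fs.span_minimal[of "{t'}"] by simp
qed

lemma inj_on_tensor_line_rel: "inj_on tensor_line_rel (tensor_lines s1 s2)"
proof (rule inj_onI)
  fix L L' assume "L \<in> tensor_lines s1 s2" "L' \<in> tensor_lines s1 s2" and eq: "tensor_line_rel L = tensor_line_rel L'"
  then obtain t t' where t: "t \<in> tensor_space s1 s2" "L = fs.span {t}"
    and t': "t' \<in> tensor_space s1 s2" "L' = fs.span {t'}"
    unfolding tensor_lines_def by blast
  have "maps_into_rel s1 s2 (tensor_to_map t) = maps_into_rel s1 s2 (tensor_to_map t')"
    using eq unfolding t(2) t'(2) tensor_line_rel_span_singleton .
  then show "L = L'"
    using tensor_span_subset_if_maps_into_rel_eq[OF t(1) t'(1)] tensor_span_subset_if_maps_into_rel_eq[OF t'(1) t(1)]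
    unfolding t(2) t'(2) by blast
qed

lemma tensor_line_rel_dual_atom:
  assumes "L \<in> tensor_lines s1 s2"
  shows "tensor_line_rel L \<in> multimap_atoms s1 s2"
proof -
  obtain t where t: "t \<in> tensor_space s1 s2" "t \<noteq> 0" "L = fs.span {t}"
    using assms unfolding tensor_lines_def by blast
  obtain x where "tensor_to_map t x \<noteq> 0" using tensor_to_map_eq_0_imp[OF t(1)] t(2) by fastforce
  then show ?thesis
    unfolding t(3) tensor_line_rel_span_singleton by (rule maps_into_rel_dual_atom[OF linear_tensor_to_map])
qed

end

theorem theorem8p6:
  fixes s1 :: "'a::field \<Rightarrow> 'v::ab_group_add \<Rightarrow> 'v" and s2 :: "'a \<Rightarrow> 'w::ab_group_add \<Rightarrow> 'w"
    and B1 :: "'v set" and B2 :: "'w set" and n :: nat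
  assumes "finite_dimensional_vector_space s1 B1"
    and "finite_dimensional_vector_space s2 B2"
    and "vector_space.dim s1 UNIV = n"
    and "vector_space.dim s2 UNIV = n"
  shows "\<exists>f. inj_on f (tensor_lines s1 s2) \<and> f ` tensor_lines s1 s2 \<subseteq> multimap_atoms s1 s2"
proof -
  \<comment> \<open>The construction does not need \<open>E1\<close> and \<open>E2\<close> to have the same dimension.\<close>
  interpret finite_dimensional_vector_space_pair s1 B1 s2 B2
    using assms(1,2) by (simp add: finite_dimensional_vector_space_pair_def)
  show ?thesis
    using inj_on_tensor_line_rel tensor_line_rel_dual_atom by blast
qed

end
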